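(* Let $P, Q\subseteq\mathbb{R}^7$ be distinct associative $3$-planes. Then $\Theta(P)\cap\Theta(Q) = (P\cap Q)\lrcorner\varphi = \{v\lrcorner\varphi : v\in P\cap Q\}$.
   Context: Equip $\mathbb{R}^7$ with its standard inner product, orientation and basis. Let $\varphi = e_{123} - e_{167} - e_{527} - e_{563} - e_{415} - e_{426} - e_{437}$ ($e_{ijk} = e_i\wedge e_j\wedge e_k$), $\psi = \star\varphi = e_{4567} - e_{4523} - e_{4163} - e_{4127} - e_{2637} - e_{1537} - e_{1526}$, and define $\times$ by $\langle u \times v, w \rangle = \varphi(u,v,w)$. A $3$-dimensional subspace is associative if closed under $\times$. For $u,v$: $u\wedge v$ is the 2-form $(a,b)\mapsto \langle u,a\rangle\langle v,b\rangle - \langle u,b\rangle\langle v,a\rangle$; $u\lrcorner\varphi$ is the 2-form $(a,b)\mapsto \varphi(u,a,b)$; $\Psi_{uv}$ is the 2-form $(a,b)\mapsto\psi(u,v,a,b)$. For associative $P$, $\Theta(P) = \Lambda^2(P)\oplus\Psi(P)$ where $\Lambda^2(P) = \mathrm{Span}\{u\wedge v: u,v\in P\}$ and $\Psi(P) = \mathrm{Span}\{\Psi_{uv} : u,v\in P\}$. *)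

theory Defs
  imports "HOL-Analysis.Analysis"
begin

text \<open>Vectors of R^7 are \<open>real^7\<close>; the standard basis vector e_i is \<open>axis i 1\<close> for the
numerals i = 1..7 of type 7. Forms are represented as multilinear real-valued functions.\<close>

type_synonym vec7 = "real^7"
type_synonym form2 = "vec7 \<Rightarrow> vec7 \<Rightarrow> real"

definition e3 :: "7 \<Rightarrow> 7 \<Rightarrow> 7 \<Rightarrow> vec7 \<Rightarrow> vec7 \<Rightarrow> vec7 \<Rightarrow> real" where
  "e3 i j k u v w =
     u$i * (v$j * w$k - v$k * w$j)
   - u$j * (v$i * w$k - v$k * w$i)
   + u$k * (v$i * w$j - v$j * w$i)"

definition e4 :: "7 \<Rightarrow> 7 \<Rightarrow> 7 \<Rightarrow> 7 \<Rightarrow> vec7 \<Rightarrow> vec7 \<Rightarrow> vec7 \<Rightarrow> vec7 \<Rightarrow> real" where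
  "e4 i j k l a b c d =
     a$i * e3 j k l b c d - a$j * e3 i k l b c d + a$k * e3 i j l b c d - a$l * e3 i j k b c d"

definition phi :: "vec7 \<Rightarrow> vec7 \<Rightarrow> vec7 \<Rightarrow> real" where
  "phi u v w = e3 1 2 3 u v w - e3 1 6 7 u v w - e3 5 2 7 u v w - e3 5 6 3 u v w
             - e3 4 1 5 u v w - e3 4 2 6 u v w - e3 4 3 7 u v w"

definition psi :: "vec7 \<Rightarrow> vec7 \<Rightarrow> vec7 \<Rightarrow> vec7 \<Rightarrow> real" where
  "psi a b c d = e4 4 5 6 7 a b c d - e4 4 5 2 3 a b c d - e4 4 1 6 3 a b c d
               - e4 4 1 2 7 a b c d - e4 2 6 3 7 a b c d - e4 1 5 3 7 a b c d
               - e4 1 5 2 6 a b c d"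

text \<open>Cross product: \<langle>u \<times> v, w\<rangle> = phi u v w.\<close>
definition cross7 :: "vec7 \<Rightarrow> vec7 \<Rightarrow> vec7" where
  "cross7 u v = (\<chi> i. phi u v (axis i 1))"

definition associative :: "vec7 set \<Rightarrow> bool" where
  "associative P \<longleftrightarrow> subspace P \<and> dim P = 3 \<and> (\<forall>u\<in>P. \<forall>v\<in>P. cross7 u v \<in> P)"

definition wedge :: "vec7 \<Rightarrow> vec7 \<Rightarrow> form2" where
  "wedge u v = (\<lambda>a b. (u \<bullet> a) * (v \<bullet> b) - (u \<bullet> b) * (v \<bullet> a))"

definition contr :: "vec7 \<Rightarrow> form2" where
  "contr u = (\<lambda>a b. phi u a b)"

definition Psi2 :: "vec7 \<Rightarrow> vec7 \<Rightarrow> form2" where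
  "Psi2 u v = (\<lambda>a b. psi u v a b)"

definition form_span :: "form2 set \<Rightarrow> form2 set" where
  "form_span S = {f. \<exists>t c. finite t \<and> t \<subseteq> S \<and> f = (\<lambda>a b. \<Sum>g\<in>t. c g * g a b)}"

definition Lambda2 :: "vec7 set \<Rightarrow> form2 set" where
  "Lambda2 P = form_span {wedge u v | u v. u \<in> P \<and> v \<in> P}"

definition PsiP :: "vec7 set \<Rightarrow> form2 set" where
  "PsiP P = form_span {Psi2 u v | u v. u \<in> P \<and> v \<in> P}"

definition Theta :: "vec7 set \<Rightarrow> form2 set" where
  "Theta P = {(\<lambda>a b. \<alpha> a b + \<beta> a b) | \<alpha> \<beta>. \<alpha> \<in> Lambda2 P \<and> \<beta> \<in> PsiP P}"

end

theory Submission
  imports Defs "HOL-Library.Function_Algebras"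
begin

text \<open>
  Since \<open>\<Psi>\<^sub>u\<^sub>v = u \<and> v - (u \<times> v)\<lrcorner>\<phi>\<close> and every vector of an associative
  plane \<open>P\<close> is a cross product of two vectors of \<open>P\<close>, we get
  \<open>\<Theta>(P) = \<Lambda>\<^sup>2(P) + P\<lrcorner>\<phi>\<close>. A form in \<open>\<Lambda>\<^sup>2(P)\<close> is a skew form
  living on the 3-space \<open>P\<close>, so its rank is at most 2, whereas for \<open>x \<noteq> 0\<close> the
  kernel of \<open>x\<lrcorner>\<phi>\<close> is the line through \<open>x\<close>, because
  \<open>|x \<times> a|\<^sup>2 = |x|\<^sup>2 |a|\<^sup>2 - \<langle>x, a\<rangle>\<^sup>2\<close>. Hence
  \<open>\<alpha> + v\<lrcorner>\<phi> = \<beta> + w\<lrcorner>\<phi>\<close> with \<open>\<alpha> \<in> \<Lambda>\<^sup>2(P)\<close>, \<open>\<beta> \<in> \<Lambda>\<^sup>2(Q)\<close>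
  forces \<open>v = w\<close> (rank at most 4 against rank 6) and then \<open>\<alpha> = \<beta>\<close>. Finally, two
  orthogonal vectors \<open>p, r\<close> of an associative plane span it together with \<open>p \<times> r\<close>,
  so distinct associative planes meet in at most a line, and a skew form living on a line
  vanishes.
\<close>

section \<open>The cross product\<close>

lemma exhaust_7:
  fixes x :: 7
  shows "x = 1 \<or> x = 2 \<or> x = 3 \<or> x = 4 \<or> x = 5 \<or> x = 6 \<or> x = 7"
proof (induct x)
  case (of_int z)
  then have "z = 0 \<or> z = 1 \<or> z = 2 \<or> z = 3 \<or> z = 4 \<or> z = 5 \<or> z = 6" by fastforce
  then show ?case by auto
qed

lemma inner_vec7:
  "(x::real^7) \<bullet> y = x$1*y$1 + x$2*y$2 + x$3*y$3 + x$4*y$4 + x$5*y$5 + x$6*y$6 + x$7*y$7"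
proof -
  have UNIV_7: "(UNIV :: 7 set) = {1,2,3,4,5,6,7}" using exhaust_7 by auto
  show ?thesis unfolding inner_vec_def UNIV_7 by (simp add: ac_simps)
qed

lemma inner_cross7: "cross7 u v \<bullet> w = phi u v w"
  unfolding inner_vec7 by (simp add: cross7_def phi_def e3_def axis_def algebra_simps)

lemma phi_cycle: "phi u v w = phi v w u"
  by (simp add: phi_def e3_def algebra_simps)

lemma cross7_orthogonal: "cross7 u v \<bullet> u = 0" "cross7 u v \<bullet> v = 0"
  by (simp_all add: inner_cross7 phi_def e3_def algebra_simps)

lemma cross7_scaleR_left: "cross7 (c *\<^sub>R u) v = c *\<^sub>R cross7 u v"
  by (simp add: vec_eq_iff cross7_def phi_def e3_def algebra_simps)

lemma contr_eq_inner: "contr x a b = cross7 a b \<bullet> x"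
  by (simp add: contr_def inner_cross7 phi_cycle[of x a b])

lemma contr_linear:
  "contr 0 = 0" "contr (v + w) = contr v + contr w" "contr (v - w) = contr v - contr w"
  "contr (- v) = - contr v" "contr (c *\<^sub>R v) = (\<lambda>a b. c * contr v a b)"
  by (simp_all add: fun_eq_iff contr_eq_inner inner_simps)

lemma contr_cross7: "contr (cross7 x y) = wedge x y - Psi2 x y"
proof (intro ext)
  fix a b
  show "contr (cross7 x y) a b = (wedge x y - Psi2 x y) a b"
    unfolding contr_def Psi2_def wedge_def inner_vec7
    by (simp add: phi_def psi_def e4_def e3_def axis_def cross7_def) algebra
qed

lemma psi_repeated: "psi x y a y = 0"
  by (simp add: psi_def e4_def e3_def algebra_simps)

lemma cross7_inner_self: "cross7 x a \<bullet> cross7 x a = (x \<bullet> x) * (a \<bullet> a) - (x \<bullet> a)\<^sup>2"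
proof -
  have "cross7 x a \<bullet> cross7 x a = contr (cross7 x a) x a"
    by (simp add: contr_eq_inner inner_commute)
  also have "\<dots> = wedge x a x a"
    by (simp add: contr_cross7 Psi2_def psi_repeated)
  finally show ?thesis by (simp add: wedge_def power2_eq_square inner_commute)
qed

lemma cross7_cross7: "cross7 w (cross7 v w) = (w \<bullet> w) *\<^sub>R v - (w \<bullet> v) *\<^sub>R w"
proof (rule vector_eq_rdot[THEN iffD1], intro allI)
  fix c
  have "cross7 w (cross7 v w) \<bullet> c = contr (cross7 v w) c w"
    by (simp add: contr_def inner_cross7 phi_cycle)
  also have "\<dots> = wedge v w c w"
    by (simp add: contr_cross7 Psi2_def psi_repeated)
  finally show "cross7 w (cross7 v w) \<bullet> c = ((w \<bullet> w) *\<^sub>R v - (w \<bullet> v) *\<^sub>R w) \<bullet> c"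
    by (simp add: wedge_def algebra_simps inner_commute)
qed

section \<open>Skew forms living on a subspace\<close>

text \<open>\<open>skew_form_on V\<close> models \<open>\<Lambda>\<^sup>2(V)\<close> inside the 2-forms on the ambient space.\<close>

definition skew_form_on :: "'a::real_inner set \<Rightarrow> ('a \<Rightarrow> 'a \<Rightarrow> real) \<Rightarrow> bool" where
  "skew_form_on V f \<longleftrightarrow> (\<forall>a b. f b a = - f a b) \<and> (\<forall>b. \<exists>r\<in>V. \<forall>a. f a b = r \<bullet> a)"

lemma skew_form_onD:
  assumes "skew_form_on V f"
  shows "f b a = - f a b" and "\<exists>r\<in>V. \<forall>a. f a b = r \<bullet> a"
  using assms unfolding skew_form_on_def by blast+

lemma skew_form_on_linear_left:
  assumes "skew_form_on V f"
  shows "f (x + y) b = f x b + f y b" "f (x - y) b = f x b - f y b" "f (c *\<^sub>R x) b = c * f x b"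
proof -
  obtain r where "\<And>a. f a b = r \<bullet> a" using skew_form_onD(2)[OF assms] by blast
  then show "f (x + y) b = f x b + f y b" "f (x - y) b = f x b - f y b" "f (c *\<^sub>R x) b = c * f x b"
    by (simp_all add: inner_add_right inner_diff_right)
qed

lemma skew_form_on_0: "subspace V \<Longrightarrow> skew_form_on V 0"
  by (auto simp: skew_form_on_def intro!: bexI[of _ 0] subspace_0)

lemma skew_form_on_add:
  assumes "subspace V" "skew_form_on V f" "skew_form_on V g"
  shows "skew_form_on V (f + g)"
  unfolding skew_form_on_def
proof (intro conjI allI)
  fix a b
  show "(f + g) b a = - (f + g) a b"
    using skew_form_onD(1)[OF assms(2), of a b] skew_form_onD(1)[OF assms(3), of a b] by simp
  obtain r s where "r \<in> V" "s \<in> V" "\<And>a. f a b = r \<bullet> a" "\<And>a. g a b = s \<bullet> a"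
    using skew_form_onD(2)[OF assms(2)] skew_form_onD(2)[OF assms(3)] by metis
  then show "\<exists>t\<in>V. \<forall>a. (f + g) a b = t \<bullet> a"
    using assms(1) by (intro bexI[of _ "r + s"]) (auto simp: inner_add_left subspace_add)
qed

lemma skew_form_on_scale:
  assumes "subspace V" "skew_form_on V f"
  shows "skew_form_on V (\<lambda>a b. c * f a b)"
  unfolding skew_form_on_def
proof (intro conjI allI)
  fix a b
  show "c * f b a = - (c * f a b)" using skew_form_onD(1)[OF assms(2), of a b] by simp
  obtain r where "r \<in> V" "\<And>a. f a b = r \<bullet> a" using skew_form_onD(2)[OF assms(2)] by metis
  then show "\<exists>t\<in>V. \<forall>a. c * f a b = t \<bullet> a"
    using assms(1) by (intro bexI[of _ "c *\<^sub>R r"]) (auto simp: subspace_scale)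
qed

lemma skew_form_on_orthogonal:
  assumes "skew_form_on V f" "\<And>y. y \<in> V \<Longrightarrow> a \<bullet> y = 0"
  shows "f a b = 0"
  using skew_form_onD(2)[OF assms(1), of b] assms(2) by (metis inner_commute)

lemma skew_form_on_Int:
  assumes "skew_form_on V f" "skew_form_on W f"
  shows "skew_form_on (V \<inter> W) f"
  unfolding skew_form_on_def
proof (intro conjI allI)
  fix a b
  show "f b a = - f a b" using skew_form_onD(1)[OF assms(1)] .
  obtain r s where "r \<in> V" "s \<in> W" "\<And>a. f a b = r \<bullet> a" "\<And>a. f a b = s \<bullet> a"
    using skew_form_onD(2)[OF assms(1)] skew_form_onD(2)[OF assms(2)] by metis
  moreover from this have "r = s" using vector_eq_rdot by metis
  ultimately show "\<exists>r\<in>V \<inter> W. \<forall>a. f a b = r \<bullet> a" by blast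
qed

lemma skew_form_on_Int_orthogonal_kernel:
  assumes "skew_form_on V f" "\<And>a. f a k = 0"
  shows "skew_form_on (V \<inter> {y. k \<bullet> y = 0}) f"
  unfolding skew_form_on_def
proof (intro conjI allI)
  fix a b
  show "f b a = - f a b" using skew_form_onD(1)[OF assms(1)] .
  obtain r where "r \<in> V" "\<And>a. f a b = r \<bullet> a" using skew_form_onD(2)[OF assms(1)] by blast
  moreover have "k \<bullet> r = 0"
    using calculation(2)[of k] assms(2)[of b] skew_form_onD(1)[OF assms(1), of k b]
    by (simp add: inner_commute)
  ultimately show "\<exists>r\<in>V \<inter> {y. k \<bullet> y = 0}. \<forall>a. f a b = r \<bullet> a" by blast
qed

lemma skew_form_on_line:
  assumes "skew_form_on V f" "V \<subseteq> span {p}"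
  shows "f a b = 0"
proof -
  have "\<exists>l. \<forall>a. f a b = l * (p \<bullet> a)" for b
  proof -
    obtain r where "r \<in> V" "\<And>a. f a b = r \<bullet> a" using skew_form_onD(2)[OF assms(1)] by blast
    moreover obtain l where "r = l *\<^sub>R p" using assms(2) calculation(1) span_singleton by blast
    ultimately show ?thesis by auto
  qed
  then obtain l where l: "\<And>a b. f a b = l b * (p \<bullet> a)" by metis
  have skew: "f b a = - f a b" for a b using skew_form_onD(1)[OF assms(1)] .
  show ?thesis
  proof (cases "p = 0")
    case True
    then show ?thesis by (simp add: l)
  next
    case False
    have "f p p = 0" using skew[of p p] by simp
    then have "l p = 0" using l[of p p] False by simp
    then have "f p b = 0" using l[of b p] skew[of b p] by simp
    then have "l b = 0" using l[of p b] False by simp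
    then show ?thesis by (simp add: l)
  qed
qed

lemma skew_form_on_kernelI:
  assumes "skew_form_on V f" "V \<subseteq> span B" "\<And>e. e \<in> B \<Longrightarrow> f e k = 0"
  shows "f a k = 0"
proof -
  obtain r where r: "r \<in> V" "\<And>a. f a k = r \<bullet> a" using skew_form_onD(2)[OF assms(1)] by blast
  have "orthogonal r r"
    using orthogonal_to_span[of r B r] assms(2,3) r by (auto simp: orthogonal_def)
  then show ?thesis by (simp add: r(2) orthogonal_def)
qed

lemma orthogonal_basis_3:
  fixes V :: "'a::euclidean_space set"
  assumes "subspace V" "dim V = 3"
  obtains u w z where "u \<in> V" "w \<in> V" "z \<in> V" "V \<subseteq> span {u, w, z}"
    "u \<noteq> 0" "w \<noteq> 0" "z \<noteq> 0" "u \<bullet> w = 0" "u \<bullet> z = 0" "w \<bullet> z = 0"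
proof -
  obtain B where B: "independent B" "B \<subseteq> span V" "V \<subseteq> span B" "card B = dim V"
    "pairwise orthogonal B"
    using orthogonal_basis_exists by blast
  then obtain u w z where uwz: "B = {u, w, z}" "u \<noteq> w" "w \<noteq> z" "u \<noteq> z"
    using assms(2) by (auto simp: card_3_iff)
  have "B \<subseteq> V" using B(2) assms(1) by (metis span_eq_iff)
  moreover have "0 \<notin> B" using B(1) dependent_zero by blast
  moreover have "u \<bullet> w = 0" "u \<bullet> z = 0" "w \<bullet> z = 0"
    using B(5) uwz by (auto simp: pairwise_def orthogonal_def)
  ultimately show ?thesis using that[of u w z] B(3) uwz(1) by simp
qed

lemma skew_form_on_kernel_exists:
  fixes V :: "'a::euclidean_space set"
  assumes "subspace V" "dim V = 3" "skew_form_on V f"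
  obtains k where "k \<in> V" "k \<noteq> 0" "\<And>a. f a k = 0"
proof -
  have skew: "f b a = - f a b" for a b using skew_form_onD(1)[OF assms(3)] .
  have diag: "f a a = 0" for a using skew[of a a] by simp
  obtain u w z where basis: "u \<in> V" "w \<in> V" "z \<in> V" "V \<subseteq> span {u, w, z}"
    and nonzero: "u \<noteq> 0" "w \<noteq> 0" "z \<noteq> 0" and orth: "u \<bullet> w = 0" "u \<bullet> z = 0" "w \<bullet> z = 0"
    using orthogonal_basis_3[OF assms(1,2)] by metis
  note kernel = skew_form_on_kernelI[OF assms(3) basis(4)]
  \<comment> \<open>the Hodge dual of \<open>f\<close> on \<open>V\<close>; if it vanishes, so does \<open>f\<close> on \<open>V\<close>,
    and \<open>u\<close> is a kernel vector\<close>
  define k where "k = f w z *\<^sub>R u - f u z *\<^sub>R w + f u w *\<^sub>R z"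
  show ?thesis
  proof (cases "k = 0")
    case True
    have "k \<bullet> u = f w z * (u \<bullet> u)" "k \<bullet> w = - f u z * (w \<bullet> w)" "k \<bullet> z = f u w * (z \<bullet> z)"
      unfolding k_def using orth by (simp_all add: algebra_simps inner_commute)
    then have "f w z = 0" "f u z = 0" "f u w = 0" using True nonzero by auto
    then have "f e u = 0" if "e \<in> {u, w, z}" for e
      using that diag[of u] skew[of u w] skew[of u z] by auto
    then show ?thesis using that basis(1) nonzero(1) kernel by metis
  next
    case False
    have "f e k = 0" if "e \<in> {u, w, z}" for e
    proof -
      have "f e k = - (f w z * f u e - f u z * f w e + f u w * f z e)"
        using skew[of k e] unfolding k_def by (simp add: skew_form_on_linear_left[OF assms(3)])
      then show ?thesis
        using that diag[of u] diag[of w] diag[of z] skew[of u w] skew[of u z] skew[of w z]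
        by (auto simp: algebra_simps)
    qed
    moreover have "k \<in> V" unfolding k_def using basis(1-3) assms(1)
      by (intro subspace_add subspace_diff subspace_scale)
    ultimately show ?thesis using that kernel False by metis
  qed
qed

lemma skew_form_on_rank_le_2:
  fixes V :: "'a::euclidean_space set"
  assumes "subspace V" "dim V \<le> 3" "skew_form_on V f"
  obtains W where "dim W \<le> 2" "skew_form_on W f"
proof (cases "dim V = 3")
  case True
  obtain k where k: "k \<in> V" "k \<noteq> 0" "\<And>a. f a k = 0"
    using skew_form_on_kernel_exists[OF assms(1) True assms(3)] by blast
  define W where "W = V \<inter> {y. k \<bullet> y = 0}"
  have "subspace W" unfolding W_def using assms(1) by (simp add: subspace_inter subspace_hyperplane)
  moreover have "W \<subset> V"
  proof -
    have "k \<notin> W" using k(2) by (simp add: W_def)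
    then show ?thesis using k(1) W_def by blast
  qed
  ultimately have "dim W < dim V" using assms(1) by (metis dim_psubset span_eq_iff)
  moreover have "skew_form_on W f"
    unfolding W_def using skew_form_on_Int_orthogonal_kernel[OF assms(3) k(3)] .
  ultimately show ?thesis using that[of W] True by simp
next
  case False
  then show ?thesis using that[of V] assms(2,3) by simp
qed

lemma contr_eq_skew_form_diff_imp_0:
  assumes "skew_form_on V \<alpha>" "skew_form_on W \<beta>" "dim V \<le> 2" "dim W \<le> 2"
    and "contr x = \<alpha> - \<beta>"
  shows "x = 0"
proof -
  \<comment> \<open>a vector \<open>a \<noteq> 0\<close> orthogonal to \<open>V\<close>, \<open>W\<close> and \<open>x\<close> kills \<open>contr x a\<close>,
    although \<open>|x \<times> a|\<^sup>2 = |x|\<^sup>2 |a|\<^sup>2\<close>\<close>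
  obtain BV where BV: "independent BV" "V \<subseteq> span BV" "card BV = dim V"
    using basis_exists[of V] by metis
  obtain BW where BW: "independent BW" "W \<subseteq> span BW" "card BW = dim W"
    using basis_exists[of W] by metis
  define S where "S = insert x (BV \<union> BW)"
  have "finite (BV \<union> BW)" using BV(1) BW(1) by (simp add: independent_imp_finite)
  then have "dim S \<le> card S" unfolding S_def by (intro dim_le_card span_superset) simp
  also have "\<dots> \<le> Suc (card (BV \<union> BW))"
    unfolding S_def using \<open>finite (BV \<union> BW)\<close> by (simp add: card_insert_if)
  also have "\<dots> \<le> Suc (card BV + card BW)" using card_Un_le by simp
  finally have "dim S < DIM(real^7)" using BV(3) BW(3) assms(3,4) by simp
  then obtain a where a: "a \<noteq> 0" "\<And>y. y \<in> span S \<Longrightarrow> a \<bullet> y = 0"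
    using orthogonal_to_subspace_exists[of S] unfolding orthogonal_def by metis
  have "span BV \<subseteq> span S" "span BW \<subseteq> span S"
    unfolding S_def by (simp_all add: span_mono subset_insertI2)
  then have "\<alpha> a b = 0" "\<beta> a b = 0" for b
    using skew_form_on_orthogonal[OF assms(1)] skew_form_on_orthogonal[OF assms(2)]
      BV(2) BW(2) a(2) by blast+
  then have "contr x a (cross7 x a) = 0" using assms(5) by simp
  then have "cross7 x a \<bullet> cross7 x a = 0" by (simp add: contr_def inner_cross7)
  moreover have "x \<bullet> a = 0" using a(2)[of x] by (simp add: S_def span_base inner_commute)
  ultimately show "x = 0" using cross7_inner_self[of x a] a(1) by simp
qed

section \<open>Associative planes\<close>

lemma associativeD:
  assumes "associative P"
  shows "subspace P" "dim P = 3" "u \<in> P \<Longrightarrow> v \<in> P \<Longrightarrow> cross7 u v \<in> P"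
  using assms by (simp_all add: associative_def)

lemma associative_eq_span_cross7:
  assumes "associative P" "p \<in> P" "r \<in> P" "p \<noteq> 0" "r \<noteq> 0" "p \<bullet> r = 0"
  shows "P = span {p, r, cross7 p r}"
proof -
  define z where "z = cross7 p r"
  have sub: "{p, r, z} \<subseteq> P" using assms associativeD(3) unfolding z_def by blast
  have zp: "z \<bullet> p = 0" "z \<bullet> r = 0" unfolding z_def by (simp_all add: cross7_orthogonal)
  have "z \<bullet> z = (p \<bullet> p) * (r \<bullet> r)" unfolding z_def using cross7_inner_self[of p r] assms(6) by simp
  then have "z \<noteq> 0" using assms(4,5) by auto
  then have distinct: "p \<noteq> r" "p \<noteq> z" "r \<noteq> z" using assms(4,5,6) zp by (auto simp: inner_commute)
  have "pairwise orthogonal {p, r, z}" using assms(6) zp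
    by (auto simp: pairwise_def orthogonal_def inner_commute)
  then have "independent {p, r, z}"
    using assms(4,5) \<open>z \<noteq> 0\<close> by (intro pairwise_orthogonal_independent) auto
  then have "P \<subseteq> span {p, r, z}"
    using card_ge_dim_independent[OF sub] distinct associativeD(2)[OF assms(1)] by simp
  moreover have "span {p, r, z} \<subseteq> P" using sub associativeD(1)[OF assms(1)] by (rule span_minimal)
  ultimately show ?thesis unfolding z_def by auto
qed

lemma associative_Int_subset_line:
  assumes "associative P" "associative Q" "P \<noteq> Q"
  obtains p where "P \<inter> Q \<subseteq> span {p}"
proof -
  have "subspace (P \<inter> Q)" using associativeD(1) assms(1,2) by (simp add: subspace_inter)
  obtain B where B: "independent B" "B \<subseteq> span (P \<inter> Q)" "P \<inter> Q \<subseteq> span B" "pairwise orthogonal B"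
    using orthogonal_basis_exists[of "P \<inter> Q"] by blast
  have BPQ: "B \<subseteq> P \<inter> Q" using B(2) span_eq_iff[THEN iffD2, OF \<open>subspace (P \<inter> Q)\<close>] by simp
  have single: "p = r" if "p \<in> B" "r \<in> B" for p r
  proof (rule ccontr)
    assume "p \<noteq> r"
    then have "p \<bullet> r = 0" using B(4) that by (simp add: pairwise_def orthogonal_def)
    moreover have "p \<noteq> 0" "r \<noteq> 0" using B(1) that dependent_zero by blast+
    moreover have "p \<in> P" "r \<in> P" "p \<in> Q" "r \<in> Q" using BPQ that by auto
    ultimately have "P = span {p, r, cross7 p r}" "Q = span {p, r, cross7 p r}"
      using associative_eq_span_cross7 assms(1,2) by blast+
    then show False using assms(3) by simp
  qed
  show ?thesis
  proof (cases "B = {}")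
    case True
    then show ?thesis using B(3) that[of 0] by simp
  next
    case False
    then obtain p where "p \<in> B" by blast
    then have "B \<subseteq> {p}" using single by blast
    then show ?thesis using B(3) that[of p] span_mono by blast
  qed
qed

lemma associative_obtain_cross7:
  assumes "associative P" "v \<in> P"
  obtains x y where "x \<in> P" "y \<in> P" "v = cross7 x y"
proof (cases "v = 0")
  case True
  have "cross7 0 0 = 0" using cross7_scaleR_left[of 0 0 0] by simp
  moreover have "0 \<in> P" using associativeD(1)[OF assms(1)] by (rule subspace_0)
  ultimately show ?thesis using that[of 0 0] True by simp
next
  case False
  have sP: "span P = P" using associativeD(1)[OF assms(1)] by (rule span_eq_iff[THEN iffD2])
  have "span {v} \<subseteq> P" using assms(2) associativeD(1)[OF assms(1)] by (simp add: span_minimal)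
  moreover have "dim (span {v}) \<noteq> dim P" using False associativeD(2)[OF assms(1)] by simp
  ultimately have "span {v} \<subset> span P" unfolding sP by (metis psubsetI)
  then obtain w where "w \<noteq> 0" "w \<in> span P" "\<And>y. y \<in> span {v} \<Longrightarrow> orthogonal w y"
    using orthogonal_to_subspace_exists_gen by blast
  then have w: "w \<noteq> 0" "w \<in> P" "orthogonal w v" using sP by (auto intro: span_base)
  have "cross7 ((1 / (w \<bullet> w)) *\<^sub>R w) (cross7 v w) = v"
    using w(1,3) by (simp add: cross7_scaleR_left cross7_cross7 orthogonal_def inner_commute)
  moreover have "(1 / (w \<bullet> w)) *\<^sub>R w \<in> P" "cross7 v w \<in> P"
    using assms w(2) associativeD(1,3)[OF assms(1)] by (simp_all add: subspace_scale)
  ultimately show ?thesis using that by metis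
qed

section \<open>The spaces \<open>\<Theta>(P)\<close>\<close>

interpretation form: vector_space "\<lambda>c (f::form2) a b. c * f a b"
  by unfold_locales (simp_all add: fun_eq_iff algebra_simps)

lemma form_span_eq_span: "form_span S = form.span S"
proof -
  have "(\<Sum>g\<in>t. F g) a b = (\<Sum>g\<in>t. F g a b)" for t and F :: "form2 \<Rightarrow> form2" and a b
    by (induction t rule: infinite_finite_induct) auto
  then show ?thesis unfolding form_span_def form.span_explicit by (auto simp: fun_eq_iff)
qed

lemma Lambda2_eq_span: "Lambda2 P = form.span {wedge u v | u v. u \<in> P \<and> v \<in> P}"
  unfolding Lambda2_def form_span_eq_span ..

lemma Lambda2_zero: "0 \<in> Lambda2 P"
  unfolding Lambda2_eq_span by (rule form.span_zero)

lemma Theta_eq_span: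
  "Theta P = form.span ({wedge u v | u v. u \<in> P \<and> v \<in> P} \<union> {Psi2 u v | u v. u \<in> P \<and> v \<in> P})"
proof -
  have "(\<lambda>a b. \<alpha> a b + \<beta> a b) = \<alpha> + \<beta>" for \<alpha> \<beta> :: form2
    by (simp add: fun_eq_iff)
  then show ?thesis
    unfolding Theta_def form.span_Un Lambda2_eq_span PsiP_def form_span_eq_span by simp
qed

lemma skew_form_on_wedge:
  assumes "subspace V" "u \<in> V" "v \<in> V"
  shows "skew_form_on V (wedge u v)"
  unfolding skew_form_on_def
proof (intro conjI allI)
  fix a b
  show "wedge u v b a = - wedge u v a b" by (simp add: wedge_def)
  show "\<exists>r\<in>V. \<forall>a. wedge u v a b = r \<bullet> a"
    using assms by (intro bexI[of _ "(v \<bullet> b) *\<^sub>R u - (u \<bullet> b) *\<^sub>R v"])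
      (auto simp: wedge_def inner_diff_right inner_commute mult.commute
        subspace_diff subspace_scale)
qed

lemma Lambda2_skew_form_on:
  assumes "subspace P" "\<alpha> \<in> Lambda2 P"
  shows "skew_form_on P \<alpha>"
proof -
  have "form.subspace {f. skew_form_on P f}"
    using assms(1)
    by (auto intro!: form.subspaceI skew_form_on_0 skew_form_on_add skew_form_on_scale)
  moreover have "{wedge u v | u v. u \<in> P \<and> v \<in> P} \<subseteq> {f. skew_form_on P f}"
    using assms(1) skew_form_on_wedge by blast
  ultimately show ?thesis
    using assms(2) form.span_minimal unfolding Lambda2_eq_span by blast
qed

lemma form_subspace_Lambda2_plus_contr:
  assumes "subspace P"
  shows "form.subspace {\<alpha> + contr v | \<alpha> v. \<alpha> \<in> Lambda2 P \<and> v \<in> P}" (is "form.subspace ?T")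
proof -
  have T_intro: "\<alpha> + contr v \<in> ?T" if "\<alpha> \<in> Lambda2 P" "v \<in> P" for \<alpha> v
    using that by blast
  show ?thesis
  proof (rule form.subspaceI)
    show "0 \<in> ?T" using T_intro[OF Lambda2_zero subspace_0[OF assms]] by (simp add: contr_linear(1))
  next
    fix f g assume "f \<in> ?T" "g \<in> ?T"
    then obtain \<alpha> v \<beta> w where \<alpha>: "\<alpha> \<in> Lambda2 P" "v \<in> P" "f = \<alpha> + contr v"
      and \<beta>: "\<beta> \<in> Lambda2 P" "w \<in> P" "g = \<beta> + contr w" by blast
    have "f + g = (\<alpha> + \<beta>) + contr (v + w)"
      unfolding \<alpha>(3) \<beta>(3) contr_linear(2) by (simp add: ac_simps)
    also have "\<dots> \<in> ?T" using \<alpha> \<beta>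
      by (intro T_intro subspace_add[OF assms]) (simp_all add: Lambda2_eq_span form.span_add)
    finally show "f + g \<in> ?T" .
  next
    fix c f assume "f \<in> ?T"
    then obtain \<alpha> v where \<alpha>: "\<alpha> \<in> Lambda2 P" "v \<in> P" "f = \<alpha> + contr v" by blast
    have "(\<lambda>a b. c * f a b) = (\<lambda>a b. c * \<alpha> a b) + contr (c *\<^sub>R v)"
      unfolding \<alpha>(3) contr_linear(5) by (simp add: fun_eq_iff algebra_simps)
    also have "\<dots> \<in> ?T" using \<alpha>
      by (intro T_intro subspace_scale[OF assms]) (simp_all add: Lambda2_eq_span form.span_scale)
    finally show "(\<lambda>a b. c * f a b) \<in> ?T" .
  qed
qed

lemma Theta_eq:
  assumes "associative P"
  shows "Theta P = {\<alpha> + contr v | \<alpha> v. \<alpha> \<in> Lambda2 P \<and> v \<in> P}" (is "_ = ?T")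
proof (rule equalityI)
  let ?W = "{wedge u v | u v. u \<in> P \<and> v \<in> P}" and ?S = "{Psi2 u v | u v. u \<in> P \<and> v \<in> P}"
  have sP: "subspace P" using associativeD(1)[OF assms] .
  have "wedge u v \<in> ?T" "Psi2 u v \<in> ?T" if "u \<in> P" "v \<in> P" for u v
  proof -
    have W: "wedge u v \<in> Lambda2 P"
      unfolding Lambda2_eq_span using that by (blast intro: form.span_base)
    have "0 \<in> P" "- cross7 u v \<in> P"
      using that sP associativeD(3)[OF assms] by (simp_all add: subspace_0 subspace_neg)
    then have T: "wedge u v + contr 0 \<in> ?T" "wedge u v + contr (- cross7 u v) \<in> ?T"
      using W by blast+
    from T(1) show "wedge u v \<in> ?T" by (simp add: contr_linear(1))
    have "Psi2 u v = wedge u v + contr (- cross7 u v)" by (simp add: contr_linear contr_cross7)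
    with T(2) show "Psi2 u v \<in> ?T" by (simp only:)
  qed
  then have "?W \<union> ?S \<subseteq> ?T" by blast
  then show "Theta P \<subseteq> ?T"
    unfolding Theta_eq_span
    using form_subspace_Lambda2_plus_contr[OF sP] by (rule form.span_minimal)
  show "?T \<subseteq> Theta P"
  proof
    fix f assume "f \<in> ?T"
    then obtain \<alpha> v where \<alpha>: "\<alpha> \<in> Lambda2 P" "v \<in> P" "f = \<alpha> + contr v" by blast
    obtain x y where xy: "x \<in> P" "y \<in> P" and v: "v = cross7 x y"
      using associative_obtain_cross7[OF assms \<alpha>(2)] .
    have "contr v \<in> form.span (?W \<union> ?S)"
      unfolding v contr_cross7 using xy by (intro form.span_diff form.span_base) blast+
    moreover have "\<alpha> \<in> form.span (?W \<union> ?S)"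
      using \<alpha>(1) form.span_mono[of ?W] unfolding Lambda2_eq_span by blast
    ultimately show "f \<in> Theta P" unfolding Theta_eq_span \<alpha>(3) by (rule form.span_add[rotated])
  qed
qed

lemma Lambda2_contr_unique:
  assumes "associative P" "associative Q" "\<alpha> \<in> Lambda2 P" "\<beta> \<in> Lambda2 Q"
    and "\<alpha> + contr v = \<beta> + contr w"
  shows "v = w"
proof -
  have rank: "\<exists>V. dim V \<le> 2 \<and> skew_form_on V \<gamma>" if "associative R" "\<gamma> \<in> Lambda2 R" for R \<gamma>
  proof -
    have "subspace R" "dim R \<le> 3" using associativeD[OF that(1)] by simp_all
    moreover from this(1) have "skew_form_on R \<gamma>" using that(2) by (rule Lambda2_skew_form_on)
    ultimately show ?thesis using skew_form_on_rank_le_2 by metis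
  qed
  obtain V W where "dim V \<le> 2" "skew_form_on V \<alpha>" "dim W \<le> 2" "skew_form_on W \<beta>"
    using rank[OF assms(1,3)] rank[OF assms(2,4)] by blast
  moreover have "contr (v - w) = \<beta> - \<alpha>"
    using assms(5) unfolding contr_linear by (simp add: algebra_simps)
  ultimately have "v - w = 0" using contr_eq_skew_form_diff_imp_0 by metis
  then show ?thesis by simp
qed

lemma Lambda2_Int_eq_0:
  assumes "associative P" "associative Q" "P \<noteq> Q" "\<alpha> \<in> Lambda2 P" "\<alpha> \<in> Lambda2 Q"
  shows "\<alpha> = 0"
proof -
  obtain p where p: "P \<inter> Q \<subseteq> span {p}" using associative_Int_subset_line[OF assms(1-3)] .
  have "skew_form_on (P \<inter> Q) \<alpha>"
    using skew_form_on_Int Lambda2_skew_form_on associativeD(1) assms(1,2,4,5) by blast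
  then show "\<alpha> = 0" by (intro ext) (simp add: skew_form_on_line[OF _ p])
qed

theorem corollary4p13:
  fixes P Q :: "(real^7) set"
  assumes "associative P" and "associative Q" and "P \<noteq> Q"
  shows "Theta P \<inter> Theta Q = {contr v | v. v \<in> P \<inter> Q}"
proof
  show "Theta P \<inter> Theta Q \<subseteq> {contr v | v. v \<in> P \<inter> Q}"
  proof
    fix f assume "f \<in> Theta P \<inter> Theta Q"
    then obtain \<alpha> v \<beta> w where \<alpha>: "\<alpha> \<in> Lambda2 P" "v \<in> P" "f = \<alpha> + contr v"
      and \<beta>: "\<beta> \<in> Lambda2 Q" "w \<in> Q" "f = \<beta> + contr w"
      unfolding Theta_eq[OF assms(1)] Theta_eq[OF assms(2)] by blast
    have "v = w" using Lambda2_contr_unique[OF assms(1,2) \<alpha>(1) \<beta>(1)] \<alpha>(3) \<beta>(3) by simp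
    then have "\<alpha> \<in> Lambda2 Q" using \<alpha>(3) \<beta>(1,3) by simp
    then have "\<alpha> = 0" using Lambda2_Int_eq_0[OF assms \<alpha>(1)] by simp
    then show "f \<in> {contr v | v. v \<in> P \<inter> Q}" using \<alpha> \<beta>(2) \<open>v = w\<close> by auto
  qed
  show "{contr v | v. v \<in> P \<inter> Q} \<subseteq> Theta P \<inter> Theta Q"
    unfolding Theta_eq[OF assms(1)] Theta_eq[OF assms(2)] using Lambda2_zero by force
qed

end
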